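(* Let $q,t$ be nonzero complex numbers, neither a root of unity, with $\arg q,\arg t\in[0,2\pi)$. For $h\in\mathbb{C}$ put $D(q,t,h)=\{(r,s)\in\mathbb{Z}_{\ge1}^2: h^2=h_{r,s}^2\}$, where $h_{r,s}=t^{r/2}q^{-s/2}+t^{-r/2}q^{s/2}$. Then $\#D(q,t,h)\le1$ for every $h\in\mathbb{C}$ in each of the following cases: (i) $|q|\ne1$ and either $\log|t|/\log|q|\notin\mathbb{Q}$ or $\arg t-\arg q\cdot\frac{\log|t|}{\log|q|}\notin2\pi\mathbb{Q}$; (ii) $|q|\ne1$, $|t|=1$ and $\arg t\notin2\pi\mathbb{Q}$; (iii) $|q|=1$, $|t|\ne1$ and $\arg q\notin2\pi\mathbb{Q}$.
   Context: Here $h_{r,s}^2=(t^{r}q^{-s})+2+(t^{r}q^{-s})^{-1}$, so $h_{r,s}^2$ does not depend on the choice of square roots $t^{1/2},q^{1/2}$. *)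

theory Defs
  imports "HOL-Analysis.Analysis"
begin

definition arg0 :: "complex \<Rightarrow> real" where
  "arg0 z = (if Arg z < 0 then Arg z + 2 * pi else Arg z)"

definition root_of_unity :: "complex \<Rightarrow> bool" where
  "root_of_unity z \<longleftrightarrow> (\<exists>n::nat. n > 0 \<and> z ^ n = 1)"

text \<open>h_{r,s}^2 = t^r q^{-s} + 2 + (t^r q^{-s})^{-1}, independent of square roots.\<close>
definition hsq :: "complex \<Rightarrow> complex \<Rightarrow> int \<Rightarrow> int \<Rightarrow> complex" where
  "hsq q t r s = t powi r * q powi (-s) + 2 + inverse (t powi r * q powi (-s))"

definition Dset :: "complex \<Rightarrow> complex \<Rightarrow> complex \<Rightarrow> (int \<times> int) set" where
  "Dset q t h = {(r, s). r \<ge> 1 \<and> s \<ge> 1 \<and> h ^ 2 = hsq q t r s}"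

end

theory Submission
  imports Defs "HOL-Library.Real_Mod"
begin

(* Write x(r,s) = t^r q^(-s), so that hsq q t r s = x + 2 + 1/x.  The map
   x |-> x + 2 + 1/x identifies exactly x and 1/x, hence two pairs (r,s), (r',s') in
   D(q,t,h) satisfy either t^(r-r') = q^(s-s') or t^(r+r') = q^(s+s').
   The hypotheses of the theorem say precisely that q and t are multiplicatively
   independent: t^a = q^b forces a = b = 0.  Indeed, taking moduli and arguments,
   t^a = q^b gives a ln|t| = b ln|q| and a arg t - b arg q \<in> 2 pi \<int>; with a, b both
   nonzero this contradicts each of the three cases, and if one of a, b vanishes the
   other does too since neither q nor t is a root of unity.
   Since r + r' \<ge> 2, the second alternative is then impossible and the first gives
   (r,s) = (r',s'), so D(q,t,h) has at most one element. *)

lemma not_root_of_unity_powi_eq_1: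
  assumes "\<not> root_of_unity z" "z powi b = 1"
  shows "b = 0"
proof (rule ccontr)
  assume "b \<noteq> 0"
  then have "z ^ nat \<bar>b\<bar> = 1" and "nat \<bar>b\<bar> > 0"
    using assms(2) by (auto simp: power_int_def power_inverse split: if_splits)
  then show False using assms(1) unfolding root_of_unity_def by blast
qed

lemma polar_arg0: "z = of_real (cmod z) * cis (arg0 z)"
proof -
  have "cis (arg0 z) = cis (Arg z)"
    by (simp add: arg0_def cis_mult[symmetric])
  then show ?thesis using rcis_cmod_Arg[of z] by (simp add: rcis_def)
qed

lemma polar_powi: "z powi a = of_real (cmod z powi a) * cis (of_int a * arg0 z)"
proof -
  have "z powi a = (of_real (cmod z) * cis (arg0 z)) powi a" using polar_arg0[of z] by simp
  also have "\<dots> = of_real (cmod z powi a) * cis (of_int a * arg0 z)"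
    by (simp add: power_int_mult_distrib cis_power_int)
  finally show ?thesis .
qed

lemma powi_eq_log_relations:
  fixes q t :: complex
  assumes "q \<noteq> 0" "t \<noteq> 0" and eq: "t powi a = q powi b"
  shows "of_int a * ln (cmod t) = of_int b * ln (cmod q)"
    and "\<exists>k::int. of_int a * arg0 t - of_int b * arg0 q = of_int k * (2 * pi)"
proof -
  have moduli: "cmod t powi a = cmod q powi b"
    using arg_cong[OF eq, of cmod] by (simp add: norm_power_int)
  have "ln (cmod t powi a) = ln (cmod q powi b)" using moduli by simp
  then show "of_int a * ln (cmod t) = of_int b * ln (cmod q)"
    using assms(1,2) by (simp add: ln_powr[symmetric] powr_real_of_int')
  have "cmod t powi a \<noteq> 0" using assms(2) by simp
  then have "cis (of_int a * arg0 t) = cis (of_int b * arg0 q)"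
    using eq moduli by (metis polar_powi mult_cancel_left of_real_eq_0_iff)
  then have "cis (of_int a * arg0 t - of_int b * arg0 q) = 1"
    by (simp add: cis_divide[symmetric])
  then show "\<exists>k::int. of_int a * arg0 t - of_int b * arg0 q = of_int k * (2 * pi)"
    using cis_eq_1_iff by blast
qed

definition mult_independent :: "complex \<Rightarrow> complex \<Rightarrow> bool" where
  "mult_independent q t \<longleftrightarrow> (\<forall>a b. t powi a = q powi b \<longrightarrow> a = 0 \<and> b = 0)"

text \<open>A relation with a, b both nonzero makes ln|t|/ln|q| = b/a rational and the
  argument defect equal to k/a, or forces |q| = 1 \<longleftrightarrow> |t| = 1.\<close>
lemma mult_independent_if_cases:
  fixes q t :: complex
  assumes "q \<noteq> 0" and "t \<noteq> 0"
    and "\<not> root_of_unity q" and "\<not> root_of_unity t"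
    and cases:
      "(cmod q \<noteq> 1 \<and>
          (ln (cmod t) / ln (cmod q) \<notin> \<rat> \<or>
           (arg0 t - arg0 q * (ln (cmod t) / ln (cmod q))) / (2 * pi) \<notin> \<rat>))
       \<or> (cmod q \<noteq> 1 \<and> cmod t = 1 \<and> arg0 t / (2 * pi) \<notin> \<rat>)
       \<or> (cmod q = 1 \<and> cmod t \<noteq> 1 \<and> arg0 q / (2 * pi) \<notin> \<rat>)"
  shows "mult_independent q t"
  unfolding mult_independent_def
proof (intro allI impI)
  fix a b :: int
  assume eq: "t powi a = q powi b"
  show "a = 0 \<and> b = 0"
  proof (cases "a = 0 \<or> b = 0")
    case True
    then show ?thesis
      using eq not_root_of_unity_powi_eq_1 assms(3,4) by fastforce
  next
    case False
    then have a0: "a \<noteq> 0" and b0: "b \<noteq> 0" by auto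
    have lneq: "of_int a * ln (cmod t) = of_int b * ln (cmod q)"
      using powi_eq_log_relations(1)[OF assms(1,2) eq] .
    obtain k :: int where k: "of_int a * arg0 t - of_int b * arg0 q = of_int k * (2 * pi)"
      using powi_eq_log_relations(2)[OF assms(1,2) eq] by blast
    have unit_iff: "cmod q = 1 \<longleftrightarrow> cmod t = 1"
      using lneq a0 b0 assms(1,2) by auto
    have "cmod q \<noteq> 1" "cmod t \<noteq> 1" using cases unit_iff by auto
    then have lq: "ln (cmod q) \<noteq> 0" using assms(1) by simp
    have ratio: "ln (cmod t) / ln (cmod q) = of_int b / of_int a"
      using lneq lq a0 by (simp add: field_simps)
    have "(arg0 t - arg0 q * (of_int b / of_int a)) / (2 * pi) = of_int k / of_int a"
      using k a0 by (simp add: field_simps)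
    then have "ln (cmod t) / ln (cmod q) \<in> \<rat>"
      and "(arg0 t - arg0 q * (ln (cmod t) / ln (cmod q))) / (2 * pi) \<in> \<rat>"
      using ratio by simp_all
    then show ?thesis using cases \<open>cmod q \<noteq> 1\<close> \<open>cmod t \<noteq> 1\<close> by blast
  qed
qed

lemma plus_inverse_eq_cases:
  fixes x y :: "'a :: field"
  assumes "x \<noteq> 0" "y \<noteq> 0" "x + 2 + inverse x = y + 2 + inverse y"
  shows "x = y \<or> x * y = 1"
proof -
  have "(x - y) * (x * y - 1) = 0"
    using assms by (simp add: field_simps)
  then show ?thesis by simp
qed

text \<open>Two elements of D(q,t,h) give a relation t^(r \<mp> r') = q^(s \<mp> s'); under
  independence only the trivial one with (r,s) = (r',s') survives.\<close>
lemma Dset_unique: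
  assumes "q \<noteq> 0" "t \<noteq> 0" "mult_independent q t"
    and "(r, s) \<in> Dset q t h" "(r', s') \<in> Dset q t h"
  shows "(r, s) = (r', s')"
proof -
  define x where "x = t powi r * q powi (-s)"
  define y where "y = t powi r' * q powi (-s')"
  have pos: "r \<ge> 1" "r' \<ge> 1" using assms(4,5) by (auto simp: Dset_def)
  have "x + 2 + inverse x = y + 2 + inverse y"
    using assms(4,5) by (simp add: Dset_def hsq_def x_def y_def)
  moreover have "x \<noteq> 0" "y \<noteq> 0" using assms(1,2) by (auto simp: x_def y_def)
  ultimately consider "x = y" | "x * y = 1" using plus_inverse_eq_cases by blast
  then show ?thesis
  proof cases
    case 1
    then have "t powi (r - r') = q powi (s - s')"
      using assms(1,2) by (simp add: x_def y_def power_int_diff power_int_minus field_simps)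
    then have "r - r' = 0 \<and> s - s' = 0" using assms(3) unfolding mult_independent_def by blast
    then show ?thesis by simp
  next
    case 2
    then have "t powi (r + r') = q powi (s + s')"
      using assms(1,2) by (simp add: x_def y_def power_int_add power_int_minus field_simps)
    then have "r + r' = 0" using assms(3) unfolding mult_independent_def by blast
    then show ?thesis using pos by simp
  qed
qed

theorem lemmaA7:
  fixes q t :: complex
  assumes "q \<noteq> 0" and "t \<noteq> 0"
    and "\<not> root_of_unity q" and "\<not> root_of_unity t"
    and cases:
      "(cmod q \<noteq> 1 \<and>
          (ln (cmod t) / ln (cmod q) \<notin> \<rat> \<or>
           (arg0 t - arg0 q * (ln (cmod t) / ln (cmod q))) / (2 * pi) \<notin> \<rat>))
       \<or> (cmod q \<noteq> 1 \<and> cmod t = 1 \<and> arg0 t / (2 * pi) \<notin> \<rat>)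
       \<or> (cmod q = 1 \<and> cmod t \<noteq> 1 \<and> arg0 q / (2 * pi) \<notin> \<rat>)"
  shows "\<forall>h::complex. finite (Dset q t h) \<and> card (Dset q t h) \<le> 1"
proof
  fix h :: complex
  have "mult_independent q t"
    using mult_independent_if_cases[OF assms] .
  then have "\<forall>u\<in>Dset q t h. \<forall>v\<in>Dset q t h. u = v"
    using Dset_unique[OF assms(1,2)] by fast
  then have "Dset q t h = {} \<or> (\<exists>u. Dset q t h = {u})" by blast
  then show "finite (Dset q t h) \<and> card (Dset q t h) \<le> 1" by auto
qed

end
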